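(* Let $\mathcal X$ be a finite set and let $\mathcal C$ be a set of probability measures on $(\mathcal X^\infty,\mathcal F)$. Suppose there is a probability measure $\rho$ on $(\mathcal X^\infty,\mathcal F)$ such that $\rho$ predicts every $\mu\in\mathcal C$ in total variation. Then there is a sequence $\mu_k\in\mathcal C$, $k\in\mathbb N$, such that for any positive weights $w_k$, $k\in\mathbb N$, with $\sum_{k\in\mathbb N} w_k=1$, the measure $\nu:=\sum_{k\in\mathbb N} w_k\mu_k$ predicts every $\mu\in\mathcal C$ in total variation.
   Context: $\mathcal X^\infty$ is the set of one-way infinite sequences $x_1,x_2,\dots$ with $x_i\in\mathcal X$, and $\mathcal F$ is the sigma-field generated by the cylinder sets $[x_{1..n}]$ (all infinite sequences starting with $x_1,\dots,x_n$), $n\in\mathbb N$. For probability measures $\mu,\rho$ on $(\mathcal X^\infty,\mathcal F)$ and $x_{1..n}=x_1,\dots,x_n$, the total variation distance is $v(\mu,\rho,x_{1..n}):=\sup_{A\in\mathcal F}|\rho(A\mid x_{1..n})-\mu(A\mid x_{1..n})|$, where conditioning is on the event that the sequence starts with $x_{1..n}$. We say $\rho$ predicts $\mu$ in total variation if $v(\mu,\rho,x_{1..n})\to 0$ as $n\to\infty$ for $\mu$-almost every sequence $x_1,x_2,\dots$. *)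

theory Defs
  imports "HOL-Probability.Probability" "HOL-Library.Stream"
begin

definition cyl :: "'a list \<Rightarrow> 'a stream set" where
  "cyl xs = {\<omega>. stake (length xs) \<omega> = xs}"

definition cyl_sets :: "'a stream set set" where
  "cyl_sets = sigma_sets UNIV (range cyl)"

definition seq_prob :: "'a stream measure \<Rightarrow> bool" where
  "seq_prob M \<longleftrightarrow> prob_space M \<and> space M = UNIV \<and> sets M = cyl_sets"

text \<open>Conditional probability of A given that the sequence starts with xs.
  (Division by zero yields 0, by the HOL convention.)\<close>
definition cond_prob :: "'a stream measure \<Rightarrow> 'a stream set \<Rightarrow> 'a list \<Rightarrow> real" where
  "cond_prob M A xs = measure M (A \<inter> cyl xs) / measure M (cyl xs)"

definition tv_dist :: "'a stream measure \<Rightarrow> 'a stream measure \<Rightarrow> 'a list \<Rightarrow> real" where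
  "tv_dist \<mu> \<rho> xs = (SUP A\<in>cyl_sets. \<bar>cond_prob \<rho> A xs - cond_prob \<mu> A xs\<bar>)"

definition predicts_tv :: "'a stream measure \<Rightarrow> 'a stream measure \<Rightarrow> bool" where
  "predicts_tv \<rho> \<mu> \<longleftrightarrow> (AE \<omega> in \<mu>. (\<lambda>n. tv_dist \<mu> \<rho> (stake n \<omega>)) \<longlonglongrightarrow> 0)"

definition mixture :: "(nat \<Rightarrow> real) \<Rightarrow> (nat \<Rightarrow> 'a stream measure) \<Rightarrow> 'a stream measure" where
  "mixture w \<mu> = measure_of UNIV cyl_sets (\<lambda>A. \<Sum>k. ennreal (w k) * emeasure (\<mu> k) A)"

end

theory Submission
  imports Defs
begin

text \<open>
  Prediction in total variation is governed by null sets. If \<open>\<rho>\<close> predicts \<open>\<mu>\<close>, then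
  \<open>\<mu> \<ll> \<rho>\<close>: along \<open>\<mu>\<close>-almost every path through a \<open>\<rho>\<close>-null set \<open>A\<close> the conditional
  \<open>\<mu>\<close>-probability of \<open>A\<close> eventually exceeds \<open>1/2\<close>, while its conditional \<open>\<rho>\<close>-probability
  is \<open>0\<close>. Conversely (Blackwell--Dubins), \<open>\<mu> \<ll> \<nu>\<close> implies that \<open>\<nu>\<close> predicts \<open>\<mu>\<close>:
  approximate \<open>d\<mu>/d\<nu>\<close> in \<open>L\<^sup>1(\<nu>)\<close> by a function of finitely many coordinates; then
  \<open>\<mu>\<close>-almost surely the density is eventually nearly constant, relative to \<open>\<mu>\<close>, on the
  cylinder of the observed prefix. Both directions rest on a Doob-type maximal inequality
  for cylinders. The family \<open>C\<close> is dominated by \<open>\<rho>\<close>, so by the Halmos--Savage lemma it has a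
  countable subfamily \<open>\<mu>\<^sub>k\<close> whose common null sets are null for every member of \<open>C\<close>; these
  are exactly the null sets of \<open>\<Sum>\<^sub>k w\<^sub>k \<mu>\<^sub>k\<close> when all \<open>w\<^sub>k > 0\<close>.
\<close>

section \<open>Measure-theoretic preliminaries\<close>

lemma integral_abs_diff_triangle:
  fixes f g h :: "'b \<Rightarrow> real"
  assumes "integrable M f" "integrable M g" "integrable M h"
  shows "(\<integral>x. \<bar>f x - h x\<bar> \<partial>M) \<le> (\<integral>x. \<bar>f x - g x\<bar> \<partial>M) + (\<integral>x. \<bar>g x - h x\<bar> \<partial>M)"
proof -
  have "(\<integral>x. \<bar>f x - h x\<bar> \<partial>M) \<le> (\<integral>x. \<bar>f x - g x\<bar> + \<bar>g x - h x\<bar> \<partial>M)"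
    using assms by (intro integral_mono) auto
  also have "\<dots> = (\<integral>x. \<bar>f x - g x\<bar> \<partial>M) + (\<integral>x. \<bar>g x - h x\<bar> \<partial>M)"
    using assms by (intro Bochner_Integration.integral_add) auto
  finally show ?thesis .
qed

lemma tendsto_L1_if_dominated:
  fixes f w :: "'b \<Rightarrow> real"
  assumes "integrable M f" "integrable M w" "\<And>i. integrable M (s i)"
    and "\<And>x. x \<in> space M \<Longrightarrow> (\<lambda>i. s i x) \<longlonglongrightarrow> f x"
    and "\<And>i x. x \<in> space M \<Longrightarrow> \<bar>s i x\<bar> \<le> w x"
  shows "(\<lambda>i. \<integral>x. \<bar>f x - s i x\<bar> \<partial>M) \<longlonglongrightarrow> 0"
proof -
  have "(\<lambda>i. \<integral>x. \<bar>f x - s i x\<bar> \<partial>M) \<longlonglongrightarrow> (\<integral>x. \<bar>f x - f x\<bar> \<partial>M)"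
  proof (rule integral_dominated_convergence[where w = "\<lambda>x. \<bar>f x\<bar> + w x"])
    show "AE x in M. (\<lambda>i. \<bar>f x - s i x\<bar>) \<longlonglongrightarrow> \<bar>f x - f x\<bar>"
      using assms(4) by (intro AE_I2 tendsto_intros) auto
    show "AE x in M. norm \<bar>f x - s i x\<bar> \<le> \<bar>f x\<bar> + w x" for i
      using assms(5) by (intro AE_I2) (fastforce simp: abs_triangle_ineq4 intro: order.trans[OF abs_triangle_ineq4])
  qed (use assms(1-3) in auto)
  then show ?thesis by simp
qed

lemma abs_integral_indicator_sub_const_le:
  fixes z :: "'b \<Rightarrow> real"
  assumes "finite_measure M" "integrable M z" "E \<in> sets M"
  shows "\<bar>(\<integral>x. z x * indicator E x \<partial>M) - y * measure M E\<bar> \<le> (\<integral>x. \<bar>z x - y\<bar> * indicator E x \<partial>M)"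
proof -
  interpret finite_measure M by fact
  have "(\<integral>x. (z x - y) * indicator E x \<partial>M) = (\<integral>x. z x * indicator E x \<partial>M) - (\<integral>x. y * indicator E x \<partial>M)"
    unfolding left_diff_distrib using assms(2,3)
    by (intro Bochner_Integration.integral_diff integrable_real_mult_indicator) auto
  then have "(\<integral>x. z x * indicator E x \<partial>M) - y * measure M E = (\<integral>x. (z x - y) * indicator E x \<partial>M)"
    using assms(3) by simp
  also have "\<bar>\<dots>\<bar> \<le> (\<integral>x. \<bar>(z x - y) * indicator E x\<bar> \<partial>M)"
    by (rule integral_abs_bound)
  finally show ?thesis by (simp add: abs_mult)
qed

lemma abs_ratio_diff_le:
  fixes a b p q y e :: real
  assumes "\<bar>a - y * p\<bar> \<le> e" "\<bar>b - y * q\<bar> \<le> e" "0 \<le> p" "p \<le> q" "0 < q" "0 < b"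
  shows "\<bar>p / q - a / b\<bar> \<le> 2 * e / b"
proof -
  have "a * q - p * b = (a - y * p) * q - p * (b - y * q)" by (simp add: algebra_simps)
  then have "\<bar>a * q - p * b\<bar> \<le> \<bar>(a - y * p) * q\<bar> + \<bar>p * (b - y * q)\<bar>"
    by (simp add: abs_triangle_ineq4)
  also have "\<dots> = \<bar>a - y * p\<bar> * q + p * \<bar>b - y * q\<bar>"
    using assms(3,5) by (simp add: abs_mult)
  also have "\<dots> \<le> e * q + q * e"
    using assms by (intro add_mono mult_mono) auto
  finally have "\<bar>a * q - p * b\<bar> \<le> 2 * e * q" by simp
  moreover have "\<bar>p / q - a / b\<bar> = \<bar>a * q - p * b\<bar> / (q * b)"
    using assms(5,6) by (simp add: field_simps abs_minus_commute)
  ultimately show ?thesis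
    using assms(5,6) by (simp add: divide_le_eq field_simps)
qed

lemma measure_density_real:
  fixes h :: "'b \<Rightarrow> real"
  assumes "integrable M h" "\<And>x. 0 \<le> h x"
  shows "finite_measure (density M (\<lambda>x. ennreal (h x)))"
    and "X \<in> sets M \<Longrightarrow> measure (density M (\<lambda>x. ennreal (h x))) X = (\<integral>x. h x * indicator X x \<partial>M)"
proof -
  have emeasure: "emeasure (density M (\<lambda>x. ennreal (h x))) X = ennreal (\<integral>x. h x * indicator X x \<partial>M)"
    if "X \<in> sets M" for X
  proof -
    have "emeasure (density M (\<lambda>x. ennreal (h x))) X = (\<integral>\<^sup>+x. ennreal (h x * indicator X x) \<partial>M)"
      using that assms(1) by (auto simp: emeasure_density intro!: nn_integral_cong split: split_indicator)
    also have "\<dots> = ennreal (\<integral>x. h x * indicator X x \<partial>M)"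
      using that assms by (intro nn_integral_eq_integral integrable_real_mult_indicator) auto
    finally show ?thesis .
  qed
  show "finite_measure (density M (\<lambda>x. ennreal (h x)))"
    by standard (simp add: emeasure)
  show "measure (density M (\<lambda>x. ennreal (h x))) X = (\<integral>x. h x * indicator X x \<partial>M)" if "X \<in> sets M"
    using emeasure[OF that] assms(2) by (simp add: measure_def integral_nonneg_AE)
qed

lemma real_density_if_absolutely_continuous:
  assumes "finite_measure \<nu>" "finite_measure \<mu>" "sets \<mu> = sets \<nu>" "absolutely_continuous \<nu> \<mu>"
  obtains z where "integrable \<nu> z" "\<And>x. 0 \<le> z x" "\<mu> = density \<nu> (\<lambda>x. ennreal (z x))"
proof -
  interpret finite_measure \<nu> by fact
  obtain z where z: "z \<in> borel_measurable \<nu>" "AE x in \<nu>. RN_deriv \<nu> \<mu> x = ennreal (z x)" "\<And>x. 0 \<le> z x"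
    using real_RN_deriv[OF assms(2,4,3)] by metis
  have "density \<nu> (RN_deriv \<nu> \<mu>) = density \<nu> (\<lambda>x. ennreal (z x))"
    using z(1,2) by (intro density_cong) auto
  then have \<mu>: "\<mu> = density \<nu> (\<lambda>x. ennreal (z x))"
    using density_RN_deriv[OF assms(4,3)] by simp
  have "(\<integral>\<^sup>+x. ennreal (z x) \<partial>\<nu>) = emeasure \<mu> (space \<nu>)"
    using z(1) by (simp add: \<mu> emeasure_density)
  also have "\<dots> < \<infinity>"
    using finite_measure.emeasure_finite[OF assms(2)] by (simp add: top.not_eq_extremum)
  finally have "integrable \<nu> z"
    using z(1,3) by (intro integrableI_nonneg) auto
  then show ?thesis using that z(3) \<mu> by blast
qed

lemma (in finite_measure) finite_measure_UN_tail_small: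
  fixes A :: "nat \<Rightarrow> 'a set"
  assumes "range A \<subseteq> sets M" "e > 0"
  shows "\<exists>N. measure M ((\<Union>i. A i) - (\<Union>i<N. A i)) < e"
proof -
  have "(\<lambda>n. measure M (\<Union>i<n. A i)) \<longlonglongrightarrow> measure M (\<Union>n. \<Union>i<n. A i)"
    using assms(1) by (intro finite_Lim_measure_incseq) (auto simp: incseq_def intro: order_less_le_trans)
  moreover have "(\<Union>n. \<Union>i<n. A i) = (\<Union>i. A i)" by blast
  ultimately have "(\<lambda>n. measure M (\<Union>i<n. A i)) \<longlonglongrightarrow> measure M (\<Union>i. A i)" by simp
  then obtain N where "\<bar>measure M (\<Union>i<N. A i) - measure M (\<Union>i. A i)\<bar> < e"
    using assms(2) LIMSEQ_D[of _ _ e] by fastforce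
  then have "measure M (\<Union>i. A i) - measure M (\<Union>i<N. A i) < e"
    by arith
  then show ?thesis
    using assms(1) by (subst (asm) finite_measure_Diff[symmetric]) auto
qed

lemma (in finite_measure) AE_of_small_exceptions:
  assumes "\<And>e. e > 0 \<Longrightarrow> \<exists>B\<in>sets M. measure M B < e \<and> (\<forall>x\<in>space M - B. P x)"
  shows "AE x in M. P x"
proof -
  have "\<forall>j::nat. \<exists>B. B \<in> sets M \<and> measure M B < inverse (Suc j) \<and> (\<forall>x\<in>space M - B. P x)"
    using assms[of "inverse (Suc _)"] by auto
  then obtain B where B: "\<forall>j. B j \<in> sets M \<and> measure M (B j) < inverse (Suc j) \<and> (\<forall>x\<in>space M - B j. P x)"
    by metis
  have B_sets: "B j \<in> sets M" for j
    using B by simp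
  have B_small: "measure M (B j) < inverse (Suc j)" for j
    using B by simp
  have "measure M (\<Inter>j. B j) = 0"
  proof (rule antisym[OF _ measure_nonneg], rule ccontr)
    assume "\<not> measure M (\<Inter>j. B j) \<le> 0"
    then obtain j where "inverse (Suc j) < measure M (\<Inter>j. B j)"
      using reals_Archimedean[of "measure M (\<Inter>j. B j)"] by auto
    moreover have "measure M (\<Inter>j. B j) \<le> measure M (B j)"
      using B_sets by (intro finite_measure_mono) auto
    ultimately show False using B_small[of j] by linarith
  qed
  moreover have "(\<Inter>j. B j) \<in> sets M"
    using B_sets by blast
  ultimately have "(\<Inter>j. B j) \<in> null_sets M"
    by (simp add: null_sets_def emeasure_eq_measure)
  then show ?thesis
    by (rule AE_I') (use B in blast)
qed

lemma (in finite_measure) exists_max_measure: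
  assumes "K \<subseteq> sets M" "K \<noteq> {}" and Union: "\<And>F :: nat \<Rightarrow> 'a set. range F \<subseteq> K \<Longrightarrow> (\<Union>i. F i) \<in> K"
  obtains S where "S \<in> K" "\<And>T. T \<in> K \<Longrightarrow> measure M T \<le> measure M S"
proof -
  define \<tau> where "\<tau> = Sup (measure M ` K)"
  have bdd: "bdd_above (measure M ` K)"
    using assms(1) by (intro bdd_aboveI[of _ "measure M (space M)"]) (auto intro: bounded_measure)
  then have upper: "T \<in> K \<Longrightarrow> measure M T \<le> \<tau>" for T
    unfolding \<tau>_def by (intro cSup_upper) auto
  have "\<forall>j::nat. \<exists>T. T \<in> K \<and> \<tau> - inverse (Suc j) < measure M T"
    using less_cSup_iff[OF _ bdd, of "\<tau> - inverse (Suc _)"] assms(2) by (auto simp: \<tau>_def)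
  then obtain F where F: "\<forall>j. F j \<in> K \<and> \<tau> - inverse (Suc j) < measure M (F j)"
    by metis
  define S where "S = (\<Union>j. F j)"
  have "S \<in> K" unfolding S_def using F Union[of F] by blast
  have "\<tau> - inverse (Suc j) \<le> measure M S" for j
  proof -
    have "measure M (F j) \<le> measure M S"
      using F assms(1) \<open>S \<in> K\<close> by (intro finite_measure_mono) (auto simp: S_def)
    then show ?thesis using F by (smt (verit))
  qed
  moreover have "(\<lambda>j. \<tau> - inverse (Suc j)) \<longlonglongrightarrow> \<tau>"
    using tendsto_diff[OF tendsto_const LIMSEQ_inverse_real_of_nat, of \<tau>] by simp
  ultimately have "\<tau> \<le> measure M S"
    by (intro LIMSEQ_le_const2) auto
  then show ?thesis using that \<open>S \<in> K\<close> upper by force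
qed

text \<open>A support of \<open>\<mu>\<close> relative to \<open>M\<close>: the complement of a \<open>\<mu>\<close>-null set of maximal
  \<open>M\<close>-measure.\<close>
lemma (in finite_measure) exists_support:
  assumes "sets \<mu> = sets M"
  obtains S where "S \<in> sets M" "space M - S \<in> null_sets \<mu>"
    "\<And>X. X \<in> null_sets \<mu> \<Longrightarrow> X \<inter> S \<in> null_sets M"
proof -
  obtain N where N: "N \<in> null_sets \<mu>" "\<And>X. X \<in> null_sets \<mu> \<Longrightarrow> measure M X \<le> measure M N"
  proof (rule exists_max_measure)
    show "null_sets \<mu> \<subseteq> sets M" using assms by auto
    show "null_sets \<mu> \<noteq> {}" by blast
    show "(\<Union>i. F i) \<in> null_sets \<mu>" if "range F \<subseteq> null_sets \<mu>" for F :: "nat \<Rightarrow> 'a set"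
      using that by (intro null_sets_UN) auto
  qed blast
  have N_sets: "N \<in> sets M" using N(1) assms by auto
  show ?thesis
  proof
    show "space M - N \<in> sets M" using N_sets by auto
    show "space M - (space M - N) \<in> null_sets \<mu>"
      using N(1) sets.sets_into_space[OF N_sets] by (simp add: Diff_Diff_Int inf_absorb2)
  next
    fix X assume X: "X \<in> null_sets \<mu>"
    then have "X \<in> sets M" using assms by auto
    have "measure M N + measure M (X - N) = measure M (N \<union> X)"
      using N_sets \<open>X \<in> sets M\<close> by (simp add: finite_measure_Union')
    also have "\<dots> \<le> measure M N"
      using X N(1) by (intro N(2)) auto
    finally have "measure M (X - N) = 0" using measure_nonneg[of M "X - N"] by linarith
    moreover have "X \<inter> (space M - N) = X - N"
      using sets.sets_into_space[OF \<open>X \<in> sets M\<close>] by blast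
    ultimately show "X \<inter> (space M - N) \<in> null_sets M"
      using N_sets \<open>X \<in> sets M\<close> by (simp add: null_sets_def emeasure_eq_measure)
  qed
qed

lemma (in finite_measure) null_sets_if_null_on_support:
  assumes "sets \<mu> = sets M" "absolutely_continuous M \<mu>" "space M - S \<in> null_sets \<mu>"
    and "A \<in> sets M" "A \<inter> S \<in> null_sets M"
  shows "A \<in> null_sets \<mu>"
proof -
  have "A \<inter> S \<in> null_sets \<mu>"
    using assms(2,5) by (auto simp: absolutely_continuous_def)
  then have "(A \<inter> S) \<union> (space M - S) \<in> null_sets \<mu>"
    using assms(3) by (rule null_sets.Un)
  moreover have "A \<in> sets \<mu>" using assms(1,4) by simp
  moreover have "A \<subseteq> (A \<inter> S) \<union> (space M - S)"
    using sets.sets_into_space[OF assms(4)] by blast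
  ultimately show ?thesis by (rule null_sets_subset)
qed

lemma UN_UN_eq_UN_prod_decode:
  fixes g :: "nat \<Rightarrow> nat \<Rightarrow> 'c"
  shows "(\<Union>i. \<Union>k. f (g i k)) = (\<Union>n. f (case_prod g (prod_decode n)))"
proof (intro equalityI subsetI)
  fix x assume "x \<in> (\<Union>i. \<Union>k. f (g i k))"
  then obtain i k where "x \<in> f (g i k)" by blast
  then show "x \<in> (\<Union>n. f (case_prod g (prod_decode n)))"
    by (intro UN_I[of "prod_encode (i, k)"]) auto
qed (auto simp: split_beta)

lemma Un_UN_eq_UN_case_nat: "f a \<union> (\<Union>k. f (g k)) = (\<Union>k. f (case_nat a g k))"
proof (intro equalityI subsetI)
  fix x assume "x \<in> f a \<union> (\<Union>k. f (g k))"
  then show "x \<in> (\<Union>k. f (case_nat a g k))"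
    by (auto intro: exI[of _ 0] exI[of _ "Suc _"])
qed (auto split: nat.splits simp: gr0_conv_Suc)

lemma (in finite_measure) exists_max_measure_UN_sequence:
  assumes "C \<noteq> {}" "S ` C \<subseteq> sets M"
  obtains cs :: "nat \<Rightarrow> 'c" where "range cs \<subseteq> C"
    "\<And>ds :: nat \<Rightarrow> 'c. range ds \<subseteq> C \<Longrightarrow> measure M (\<Union>k. S (ds k)) \<le> measure M (\<Union>k. S (cs k))"
proof -
  define K where "K = {(\<Union>k::nat. S (ds k)) | ds. range ds \<subseteq> C}"
  have K_sets: "K \<subseteq> sets M"
  proof
    fix T assume "T \<in> K"
    then obtain ds :: "nat \<Rightarrow> 'c" where "range ds \<subseteq> C" "T = (\<Union>k. S (ds k))"
      unfolding K_def by blast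
    then show "T \<in> sets M" using assms(2) by blast
  qed
  obtain U where "U \<in> K" and U_max: "\<And>T. T \<in> K \<Longrightarrow> measure M T \<le> measure M U"
  proof (rule exists_max_measure[OF K_sets])
    show "K \<noteq> {}" using assms(1) by (auto simp: K_def)
    fix F :: "nat \<Rightarrow> 'a set" assume "range F \<subseteq> K"
    then have "\<forall>i. \<exists>ds :: nat \<Rightarrow> 'c. range ds \<subseteq> C \<and> F i = (\<Union>k. S (ds k))"
      unfolding K_def by blast
    then obtain ds :: "nat \<Rightarrow> nat \<Rightarrow> 'c"
      where ds: "\<And>i. range (ds i) \<subseteq> C" "\<And>i. F i = (\<Union>k. S (ds i k))"
      by metis
    have "range (\<lambda>n. case_prod ds (prod_decode n)) \<subseteq> C"
      using ds(1) by (auto simp: split_beta)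
    then show "(\<Union>i. F i) \<in> K"
      unfolding K_def ds(2) UN_UN_eq_UN_prod_decode
      by (intro CollectI exI[of _ "\<lambda>n. case_prod ds (prod_decode n)"]) simp
  qed blast
  then obtain cs :: "nat \<Rightarrow> 'c" where cs: "range cs \<subseteq> C" "U = (\<Union>k. S (cs k))"
    unfolding K_def by blast
  show ?thesis
  proof (rule that[OF cs(1)])
    fix ds :: "nat \<Rightarrow> 'c" assume "range ds \<subseteq> C"
    then have "(\<Union>k. S (ds k)) \<in> K" unfolding K_def by blast
    then show "measure M (\<Union>k. S (ds k)) \<le> measure M (\<Union>k. S (cs k))"
      using U_max cs(2) by blast
  qed
qed

text \<open>Halmos--Savage. The subfamily maximises the \<open>M\<close>-measure of the union of the supports
  of its members.\<close>
lemma halmos_savage: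
  fixes M :: "'b measure" and C :: "'b measure set"
  assumes "finite_measure M" "C \<noteq> {}"
    and sets: "\<And>\<mu>. \<mu> \<in> C \<Longrightarrow> sets \<mu> = sets M"
    and ac: "\<And>\<mu>. \<mu> \<in> C \<Longrightarrow> absolutely_continuous M \<mu>"
  obtains \<mu>s :: "nat \<Rightarrow> 'b measure"
  where "range \<mu>s \<subseteq> C" "\<And>\<mu>. \<mu> \<in> C \<Longrightarrow> (\<Inter>k. null_sets (\<mu>s k)) \<subseteq> null_sets \<mu>"
proof -
  interpret finite_measure M by fact
  have "\<forall>\<mu>\<in>C. \<exists>S. S \<in> sets M \<and> space M - S \<in> null_sets \<mu> \<and>
      (\<forall>X\<in>null_sets \<mu>. X \<inter> S \<in> null_sets M)"
    using exists_support sets by metis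
  then obtain S where S: "\<And>\<mu>. \<mu> \<in> C \<Longrightarrow> S \<mu> \<in> sets M" "\<And>\<mu>. \<mu> \<in> C \<Longrightarrow> space M - S \<mu> \<in> null_sets \<mu>"
    "\<And>\<mu> X. \<mu> \<in> C \<Longrightarrow> X \<in> null_sets \<mu> \<Longrightarrow> X \<inter> S \<mu> \<in> null_sets M"
    by metis
  have S_sets: "S ` C \<subseteq> sets M" using S(1) by blast
  obtain \<mu>s :: "nat \<Rightarrow> 'b measure" where \<mu>s: "range \<mu>s \<subseteq> C"
    and U_max: "\<And>ds :: nat \<Rightarrow> 'b measure. range ds \<subseteq> C \<Longrightarrow> measure M (\<Union>k. S (ds k)) \<le> measure M (\<Union>k. S (\<mu>s k))"
    using exists_max_measure_UN_sequence[OF \<open>C \<noteq> {}\<close> S_sets] by blast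
  define U where "U = (\<Union>k. S (\<mu>s k))"
  have U_sets: "U \<in> sets M" using \<mu>s S(1) by (auto simp: U_def)
  show ?thesis
  proof (rule that[OF \<mu>s], rule subsetI)
    fix \<mu> A assume "\<mu> \<in> C" and A: "A \<in> (\<Inter>k. null_sets (\<mu>s k))"
    have "\<mu>s 0 \<in> C" using \<mu>s by blast
    then have A_sets: "A \<in> sets M" using A sets by blast
    have "range (case_nat \<mu> \<mu>s) \<subseteq> C"
      using \<mu>s \<open>\<mu> \<in> C\<close> by (auto simp: image_subset_iff split: nat.splits)
    then have "measure M (S \<mu> \<union> U) \<le> measure M U"
      using U_max[of "case_nat \<mu> \<mu>s"] by (simp add: U_def Un_UN_eq_UN_case_nat)
    moreover have "measure M (S \<mu> \<union> U) = measure M U + measure M (S \<mu> - U)"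
      using S(1)[OF \<open>\<mu> \<in> C\<close>] U_sets by (subst Un_commute) (auto intro: finite_measure_Union')
    ultimately have "measure M (S \<mu> - U) = 0"
      using measure_nonneg[of M "S \<mu> - U"] by linarith
    moreover have "S \<mu> - U \<in> sets M"
      using S(1)[OF \<open>\<mu> \<in> C\<close>] U_sets by blast
    ultimately have "S \<mu> - U \<in> null_sets M"
      by (simp add: null_sets_def emeasure_eq_measure)
    moreover have "A \<inter> S (\<mu>s k) \<in> null_sets M" for k
      using A \<mu>s by (intro S(3)) auto
    then have "A \<inter> U \<in> null_sets M"
      unfolding U_def Int_UN_distrib by (rule null_sets_UN)
    ultimately have "(A \<inter> U) \<union> (S \<mu> - U) \<in> null_sets M"
      by (rule null_sets.Un[rotated])
    moreover have "A \<inter> S \<mu> \<in> sets M" using A_sets S(1)[OF \<open>\<mu> \<in> C\<close>] by blast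
    ultimately have "A \<inter> S \<mu> \<in> null_sets M"
      by (rule null_sets_subset) blast
    then show "A \<in> null_sets \<mu>"
      using \<open>\<mu> \<in> C\<close> by (intro null_sets_if_null_on_support[OF sets ac S(2) A_sets])
  qed
qed

section \<open>Cylinder sets\<close>

lemma sigma_algebra_cyl_sets: "sigma_algebra UNIV cyl_sets"
  unfolding cyl_sets_def by (rule sigma_algebra_sigma_sets) auto

lemma UNIV_in_cyl_sets [simp]: "UNIV \<in> cyl_sets"
  unfolding cyl_sets_def by (rule sigma_sets_top)

lemma cyl_sets_closed [simp, intro]:
  assumes "A \<in> cyl_sets" "B \<in> cyl_sets"
  shows "A \<inter> B \<in> cyl_sets" "A \<union> B \<in> cyl_sets" "A - B \<in> cyl_sets"
proof -
  interpret sigma_algebra UNIV cyl_sets by (rule sigma_algebra_cyl_sets)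
  show "A \<inter> B \<in> cyl_sets" "A \<union> B \<in> cyl_sets" "A - B \<in> cyl_sets" using assms by auto
qed

lemma cyl_in_cyl_sets [simp]: "cyl x \<in> cyl_sets"
  unfolding cyl_sets_def by (rule sigma_sets.Basic) auto

lemma mem_cyl_iff: "\<omega> \<in> cyl x \<longleftrightarrow> stake (length x) \<omega> = x"
  unfolding cyl_def by simp

lemma stake_mem_cyl [simp]: "\<omega> \<in> cyl (stake n \<omega>)"
  by (simp add: mem_cyl_iff)

lemma stake_eq_if_mem_cyl:
  assumes "\<omega> \<in> cyl x" "m \<le> length x"
  shows "stake m \<omega> = take m x"
proof -
  have "take m (stake (length x) \<omega>) = take m x" using assms(1) by (simp add: mem_cyl_iff)
  then show ?thesis using assms(2) by (simp add: take_stake min_def)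
qed

lemma cyl_stake_subset_prefix_event:
  assumes "m \<le> n" "stake m \<omega> \<in> S"
  shows "cyl (stake n \<omega>) \<subseteq> stake m -` S"
proof
  fix \<omega>' assume "\<omega>' \<in> cyl (stake n \<omega>)"
  then have "stake m \<omega>' = take m (stake n \<omega>)" using assms(1) by (intro stake_eq_if_mem_cyl) auto
  then show "\<omega>' \<in> stake m -` S" using assms by (simp add: take_stake min_def)
qed

lemma sets_cyl_imp_space_UNIV: "sets M = cyl_sets \<Longrightarrow> space M = UNIV"
  using sets.top[of M] sets.sets_into_space[of UNIV M] by auto

lemma UN_cyl_in_cyl_sets [simp]: "(\<Union>x\<in>W. cyl x) \<in> cyl_sets" for W :: "('a::countable) list set"
  by (intro sigma_algebra.countable_UN''[OF sigma_algebra_cyl_sets]) auto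

lemma prefix_event_in_cyl_sets [simp]: "stake m -` S \<in> cyl_sets" for S :: "('a::countable) list set"
proof -
  have "stake m -` S = (\<Union>x\<in>{x\<in>S. length x = m}. cyl x)"
    by (auto simp: mem_cyl_iff)
  then show ?thesis by simp
qed

definition prefix_events :: "'a stream set set" where
  "prefix_events = {stake m -` S | m S. True}"

lemma cyl_sets_eq_sigma_prefix_events:
  "cyl_sets = sigma_sets UNIV (prefix_events :: ('a::countable) stream set set)"
  unfolding cyl_sets_def
proof (rule sigma_sets_eqI)
  fix A :: "'a stream set" assume "A \<in> range cyl"
  then obtain x where "A = stake (length x) -` {x}" by (auto simp: cyl_def)
  then show "A \<in> sigma_sets UNIV prefix_events"
    unfolding prefix_events_def by auto
next
  fix A :: "'a stream set" assume "A \<in> prefix_events"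
  then obtain m S where "A = stake m -` S" unfolding prefix_events_def by blast
  then show "A \<in> sigma_sets UNIV (range cyl)"
    using prefix_event_in_cyl_sets[of m S] unfolding cyl_sets_def by simp
qed

lemma Int_stable_prefix_events: "Int_stable prefix_events"
proof (rule Int_stableI)
  fix A B :: "'a stream set" assume "A \<in> prefix_events" "B \<in> prefix_events"
  then obtain m S n T where "A = stake m -` S" "B = stake n -` T"
    unfolding prefix_events_def by blast
  then have "A \<inter> B = stake (max m n) -` {x. take m x \<in> S \<and> take n x \<in> T}"
    by (auto simp: take_stake min_def)
  then show "A \<inter> B \<in> prefix_events" unfolding prefix_events_def by blast
qed

lemma UN_prefix_events_eq:
  fixes m :: "nat \<Rightarrow> nat" and N :: nat
  shows "\<exists>k T. stake k -` T = (\<Union>i<N. stake (m i) -` S i)"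
proof (intro exI)
  have "i < N \<Longrightarrow> m i \<le> Max (m ` {..<N})" for i by simp
  then show "stake (Max (m ` {..<N})) -` {x. \<exists>i<N. take (m i) x \<in> S i} = (\<Union>i<N. stake (m i) -` S i)"
    by (auto simp: take_stake min_def)
qed

lemma cyl_sets_approx_by_prefix_event:
  fixes M :: "('a::countable) stream measure"
  assumes "finite_measure M" "sets M = cyl_sets" "A \<in> cyl_sets"
  shows "\<forall>e>0. \<exists>m S. measure M (sym_diff A (stake m -` S)) < e"
proof -
  interpret finite_measure M by fact
  have "prefix_events \<subseteq> Pow UNIV" "A \<in> sigma_sets UNIV prefix_events"
    using assms(3) by (auto simp: cyl_sets_eq_sigma_prefix_events)
  with Int_stable_prefix_events show ?thesis
  proof (induction rule: sigma_sets_induct_disjoint)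
    case (basic A)
    then obtain m S where "A = stake m -` S" unfolding prefix_events_def by blast
    then show ?case by (intro allI impI exI[of _ m] exI[of _ S]) simp
  next
    case empty
    show ?case by (intro allI impI exI[of _ 0] exI[of _ "{}"]) simp
  next
    case (compl A)
    have "sym_diff (UNIV - A) (stake m -` (- S)) = sym_diff A (stake m -` S)" for m S by auto
    then show ?case using compl.IH by (metis (no_types))
  next
    case (union A)
    show ?case
    proof (intro allI impI)
      fix e :: real assume "e > 0"
      have A: "A i \<in> sets M" for i
        using union.hyps assms(2) by (auto simp: cyl_sets_eq_sigma_prefix_events)
      moreover have "e / 2 > 0" using \<open>e > 0\<close> by simp
      ultimately obtain N where tail: "measure M ((\<Union>i. A i) - (\<Union>i<N. A i)) < e / 2"
        using finite_measure_UN_tail_small[of A "e / 2"] by blast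
      define e' where "e' = e / (2 * (real N + 1))"
      have "e' > 0" using \<open>e > 0\<close> by (simp add: e'_def)
      then have "\<forall>i. \<exists>m S. measure M (sym_diff (A i) (stake m -` S)) < e'"
        using union.IH by blast
      then obtain m S where mS: "\<And>i. measure M (sym_diff (A i) (stake (m i) -` S i)) < e'"
        by metis
      obtain k T where T: "stake k -` T = (\<Union>i<N. stake (m i) -` S i)"
        using UN_prefix_events_eq[where m = m and N = N and S = S] by blast
      have sets: "(\<Union>i. A i) - (\<Union>i<N. A i) \<in> sets M" "\<And>i. sym_diff (A i) (stake (m i) -` S i) \<in> sets M"
        using A prefix_event_in_cyl_sets[of "m i" "S i" for i, folded assms(2)] by auto
      have "measure M (sym_diff (\<Union>i. A i) (stake k -` T))
          \<le> measure M (((\<Union>i. A i) - (\<Union>i<N. A i)) \<union> (\<Union>i<N. sym_diff (A i) (stake (m i) -` S i)))"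
        unfolding T using sets by (intro finite_measure_mono) auto
      also have "\<dots> \<le> measure M ((\<Union>i. A i) - (\<Union>i<N. A i))
          + (\<Sum>i<N. measure M (sym_diff (A i) (stake (m i) -` S i)))"
        using sets by (intro order.trans[OF measure_subadditive] add_left_mono
            finite_measure_subadditive_finite) auto
      also have "\<dots> < e / 2 + real N * e'"
      proof -
        have "(\<Sum>i<N. measure M (sym_diff (A i) (stake (m i) -` S i))) \<le> real N * e'"
          using sum_bounded_above[of "{..<N}" _ e'] mS by (simp add: less_imp_le)
        then show ?thesis using tail by simp
      qed
      also have "\<dots> \<le> e"
        using \<open>e > 0\<close> by (simp add: e'_def field_simps)
      finally show "\<exists>m S. measure M (sym_diff (\<Union>i. A i) (stake m -` S)) < e" by blast
    qed
  qed
qed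

lemma prefix_function_measurable [measurable]:
  fixes M :: "('a::countable) stream measure"
  assumes "sets M = cyl_sets"
  shows "(\<lambda>\<omega>. g (stake m \<omega>) :: real) \<in> borel_measurable M"
proof -
  have "stake m \<in> measurable M (count_space UNIV)"
    unfolding measurable_count_space_eq2_countable
    using assms by (simp add: sets_cyl_imp_space_UNIV)
  then show ?thesis by (rule measurable_compose) simp
qed

lemma integrable_prefix_function:
  fixes M :: "('a::finite) stream measure"
  assumes "finite_measure M" "sets M = cyl_sets"
  shows "integrable M (\<lambda>\<omega>. g (stake m \<omega>) :: real)"
proof -
  interpret finite_measure M by fact
  have "finite {x::'a list. length x = m}"
    using finite_lists_length_eq[of "UNIV :: 'a set" m] by simp
  then have "\<bar>g (stake m \<omega>)\<bar> \<le> Max ((\<lambda>x. \<bar>g x\<bar>) ` {x. length x = m})" for \<omega>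
    by (intro Max_ge) auto
  then show ?thesis
    using assms(2) by (intro integrable_const_bound[where B = "Max ((\<lambda>x. \<bar>g x\<bar>) ` {x. length x = m})"]) auto
qed

lemma indicator_approx_by_prefix_function:
  fixes M :: "('a::countable) stream measure" and c e :: real
  assumes M: "finite_measure M" "sets M = cyl_sets" and "A \<in> cyl_sets" "e > 0"
  shows "\<exists>m g. (\<integral>\<omega>. \<bar>indicator A \<omega> *\<^sub>R c - g (stake m \<omega>)\<bar> \<partial>M) < e"
proof -
  interpret finite_measure M by fact
  have "e / (\<bar>c\<bar> + 1) > 0" using assms(4) by (simp add: add_nonneg_pos)
  then obtain m S where mS: "measure M (sym_diff A (stake m -` S)) < e / (\<bar>c\<bar> + 1)"
    using cyl_sets_approx_by_prefix_event[OF M assms(3)] by blast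
  define g where "g x = (if x \<in> S then c else 0)" for x
  have "\<bar>indicator A \<omega> *\<^sub>R c - g (stake m \<omega>)\<bar> = \<bar>c\<bar> * indicator (sym_diff A (stake m -` S)) \<omega>" for \<omega>
    by (auto simp: g_def indicator_def)
  moreover have "sym_diff A (stake m -` S) \<in> sets M"
    using assms(3) prefix_event_in_cyl_sets[of m S] M(2) by auto
  ultimately have "(\<integral>\<omega>. \<bar>indicator A \<omega> *\<^sub>R c - g (stake m \<omega>)\<bar> \<partial>M)
      = \<bar>c\<bar> * measure M (sym_diff A (stake m -` S))"
    by simp
  also have "\<dots> \<le> (\<bar>c\<bar> + 1) * measure M (sym_diff A (stake m -` S))"
    by (intro mult_right_mono) auto
  also have "\<dots> < e"
    using mS by (simp add: field_simps add_nonneg_pos)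
  finally show ?thesis by blast
qed

lemma integrable_approx_by_prefix_function:
  fixes M :: "('a::finite) stream measure" and f :: "'a stream \<Rightarrow> real"
  assumes M: "finite_measure M" "sets M = cyl_sets" and "integrable M f"
  shows "\<forall>e>0. \<exists>m g. (\<integral>\<omega>. \<bar>f \<omega> - g (stake m \<omega>)\<bar> \<partial>M) < e"
  using assms(3)
proof (induction rule: integrable_induct)
  case (base A c)
  then show ?case using indicator_approx_by_prefix_function[OF M] M(2) by auto
next
  case (add f h)
  show ?case
  proof (intro allI impI)
    fix e :: real assume "e > 0"
    then obtain m1 g1 m2 g2 where
      1: "(\<integral>\<omega>. \<bar>f \<omega> - g1 (stake m1 \<omega>)\<bar> \<partial>M) < e / 2" and
      2: "(\<integral>\<omega>. \<bar>h \<omega> - g2 (stake m2 \<omega>)\<bar> \<partial>M) < e / 2"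
      using add.IH half_gt_zero by blast
    define g where "g x = g1 (take m1 x) + g2 (take m2 x)" for x
    have g: "g (stake (max m1 m2) \<omega>) = g1 (stake m1 \<omega>) + g2 (stake m2 \<omega>)" for \<omega>
      by (simp add: g_def take_stake)
    have "(\<integral>\<omega>. \<bar>f \<omega> + h \<omega> - g (stake (max m1 m2) \<omega>)\<bar> \<partial>M)
        \<le> (\<integral>\<omega>. \<bar>f \<omega> - g1 (stake m1 \<omega>)\<bar> + \<bar>h \<omega> - g2 (stake m2 \<omega>)\<bar> \<partial>M)"
      unfolding g using add.hyps integrable_prefix_function[OF M] by (intro integral_mono) auto
    also have "\<dots> < e"
      using 1 2 add.hyps integrable_prefix_function[OF M] by (subst Bochner_Integration.integral_add) auto
    finally show "\<exists>m g. (\<integral>\<omega>. \<bar>f \<omega> + h \<omega> - g (stake m \<omega>)\<bar> \<partial>M) < e" by blast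
  qed
next
  case (lim f s)
  have "(\<lambda>i. \<integral>\<omega>. \<bar>f \<omega> - s i \<omega>\<bar> \<partial>M) \<longlonglongrightarrow> 0"
    using lim.hyps by (intro tendsto_L1_if_dominated[where w = "\<lambda>\<omega>. 2 * \<bar>f \<omega>\<bar>"]) auto
  show ?case
  proof (intro allI impI)
    fix e :: real assume "e > 0"
    then obtain i where i: "(\<integral>\<omega>. \<bar>f \<omega> - s i \<omega>\<bar> \<partial>M) < e / 2"
      using LIMSEQ_D[OF \<open>(\<lambda>i. _) \<longlonglongrightarrow> 0\<close>, of "e / 2"] by fastforce
    obtain m g where g: "(\<integral>\<omega>. \<bar>s i \<omega> - g (stake m \<omega>)\<bar> \<partial>M) < e / 2"
      using lim.IH \<open>e > 0\<close> half_gt_zero by blast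
    have "(\<integral>\<omega>. \<bar>f \<omega> - g (stake m \<omega>)\<bar> \<partial>M) < e"
      using integral_abs_diff_triangle[of M f "s i" "\<lambda>\<omega>. g (stake m \<omega>)"] i g lim.hyps
        integrable_prefix_function[OF M] by fastforce
    then show "\<exists>m g. (\<integral>\<omega>. \<bar>f \<omega> - g (stake m \<omega>)\<bar> \<partial>M) < e" by blast
  qed
qed

lemma take_eq_if_cyl_Int_nonempty:
  assumes "cyl x \<inter> cyl y \<noteq> {}" "length x \<le> length y"
  shows "take (length x) y = x"
proof -
  obtain \<omega> where "\<omega> \<in> cyl x" "\<omega> \<in> cyl y" using assms(1) by blast
  then show ?thesis using stake_eq_if_mem_cyl[of \<omega> y "length x"] assms(2) by (simp add: mem_cyl_iff)
qed

text \<open>A Doob-type maximal inequality. Its proof passes to the words of \<open>W\<close> having no proper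
  prefix in \<open>W\<close>: their cylinders are pairwise disjoint and have the same union.\<close>
lemma emeasure_UN_cyl_le:
  fixes \<mu> \<alpha> :: "('a::countable) stream measure" and W :: "'a list set"
  assumes sets: "sets \<mu> = cyl_sets" "sets \<alpha> = cyl_sets"
    and le: "\<And>x. x \<in> W \<Longrightarrow> c * emeasure \<mu> (cyl x) \<le> emeasure \<alpha> (cyl x)"
  shows "c * emeasure \<mu> (\<Union>x\<in>W. cyl x) \<le> emeasure \<alpha> UNIV"
proof -
  define W' where "W' = {x\<in>W. \<forall>k<length x. take k x \<notin> W}"
  have "(\<Union>x\<in>W. cyl x) \<subseteq> (\<Union>x\<in>W'. cyl x)"
  proof
    fix \<omega> assume "\<omega> \<in> (\<Union>x\<in>W. cyl x)"
    then obtain x where "x \<in> W" "stake (length x) \<omega> = x" by (auto simp: mem_cyl_iff)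
    then have "\<exists>k. stake k \<omega> \<in> W" by metis
    define k where "k = (LEAST k. stake k \<omega> \<in> W)"
    have "stake k \<omega> \<in> W"
      unfolding k_def using \<open>\<exists>k. stake k \<omega> \<in> W\<close> by (rule LeastI_ex)
    moreover have "take j (stake k \<omega>) \<notin> W" if "j < length (stake k \<omega>)" for j
      using that not_less_Least[of j "\<lambda>k. stake k \<omega> \<in> W"] by (simp add: k_def take_stake)
    ultimately have "stake k \<omega> \<in> W'" by (simp add: W'_def)
    then show "\<omega> \<in> (\<Union>x\<in>W'. cyl x)" using stake_mem_cyl by blast
  qed
  moreover have "W' \<subseteq> W" by (auto simp: W'_def)
  ultimately have UN_eq: "(\<Union>x\<in>W. cyl x) = (\<Union>x\<in>W'. cyl x)" by blast
  have disj: "disjoint_family_on cyl W'"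
    unfolding disjoint_family_on_def
  proof (intro ballI impI, rule ccontr)
    have no_proper_prefix: "length u < length v \<Longrightarrow> take (length u) v \<noteq> u" if "u \<in> W'" "v \<in> W'" for u v
      using that by (auto simp: W'_def)
    fix x y assume "x \<in> W'" "y \<in> W'" "x \<noteq> y" "cyl x \<inter> cyl y \<noteq> {}"
    then consider "length x < length y" "take (length x) y = x" | "length y < length x" "take (length y) x = y"
      | "length x = length y" "x = y"
      using take_eq_if_cyl_Int_nonempty[of x y] take_eq_if_cyl_Int_nonempty[of y x]
      by (metis Int_commute le_less_linear less_imp_le_nat nat_less_le take_all)
    then show False
      using no_proper_prefix \<open>x \<in> W'\<close> \<open>y \<in> W'\<close> \<open>x \<noteq> y\<close> by cases blast+
  qed
  have "c * emeasure \<mu> (\<Union>x\<in>W'. cyl x) = (\<integral>\<^sup>+x. c * emeasure \<mu> (cyl x) \<partial>count_space W')"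
    using sets disj by (simp add: emeasure_UN_countable nn_integral_cmult)
  also have "\<dots> \<le> (\<integral>\<^sup>+x. emeasure \<alpha> (cyl x) \<partial>count_space W')"
    using le \<open>W' \<subseteq> W\<close> by (intro nn_integral_mono) auto
  also have "\<dots> = emeasure \<alpha> (\<Union>x\<in>W'. cyl x)"
    using sets disj by (simp add: emeasure_UN_countable)
  also have "\<dots> \<le> emeasure \<alpha> UNIV"
    using sets by (intro emeasure_mono) auto
  finally show ?thesis by (simp add: UN_eq)
qed

lemma measure_UN_cyl_le:
  fixes \<mu> \<alpha> :: "('a::countable) stream measure" and W :: "'a list set"
  assumes "finite_measure \<mu>" "finite_measure \<alpha>" "sets \<mu> = cyl_sets" "sets \<alpha> = cyl_sets" "c \<ge> 0"
    and "\<And>x. x \<in> W \<Longrightarrow> c * measure \<mu> (cyl x) \<le> measure \<alpha> (cyl x)"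
  shows "c * measure \<mu> (\<Union>x\<in>W. cyl x) \<le> measure \<alpha> UNIV"
proof -
  interpret \<mu>: finite_measure \<mu> by fact
  interpret \<alpha>: finite_measure \<alpha> by fact
  have "ennreal c * emeasure \<mu> (\<Union>x\<in>W. cyl x) \<le> emeasure \<alpha> UNIV"
    using assms(3-6) by (intro emeasure_UN_cyl_le)
      (auto simp: \<mu>.emeasure_eq_measure \<alpha>.emeasure_eq_measure ennreal_mult[symmetric])
  then show ?thesis
    using assms(5) by (simp add: \<mu>.emeasure_eq_measure \<alpha>.emeasure_eq_measure ennreal_mult[symmetric])
qed

section \<open>Prediction in total variation and absolute continuity\<close>

lemma cond_prob_nonneg: "0 \<le> cond_prob M A x"
  by (simp add: cond_prob_def)

lemma cond_prob_le_1:
  assumes "finite_measure M" "sets M = cyl_sets" "A \<in> cyl_sets"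
  shows "cond_prob M A x \<le> 1"
proof -
  interpret finite_measure M by fact
  have "measure M (A \<inter> cyl x) \<le> measure M (cyl x)"
    using assms(2,3) by (intro finite_measure_mono) auto
  then show ?thesis
    unfolding cond_prob_def by (auto simp: divide_le_eq_1 less_le)
qed

lemma cond_prob_gt_if_small_complement:
  assumes "finite_measure M" "sets M = cyl_sets" "A \<in> cyl_sets"
    and "measure M (cyl x - A) < (1 - c) * measure M (cyl x)"
  shows "c < cond_prob M A x"
proof -
  interpret finite_measure M by fact
  have "measure M (cyl x - A) = measure M (cyl x) - measure M (A \<inter> cyl x)"
    using assms(2,3) finite_measure_Diff'[of "cyl x" A] by (simp add: inf_commute)
  moreover have "measure M (cyl x) \<noteq> 0"
    using assms(4) by auto
  then have "0 < measure M (cyl x)"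
    by (simp add: less_le)
  ultimately show ?thesis
    using assms(4) unfolding cond_prob_def by (simp add: field_simps)
qed

lemma abs_cond_prob_diff_le_tv_dist:
  fixes \<mu> \<rho> :: "('a::countable) stream measure"
  assumes "seq_prob \<mu>" "seq_prob \<rho>" "A \<in> cyl_sets"
  shows "\<bar>cond_prob \<rho> A x - cond_prob \<mu> A x\<bar> \<le> tv_dist \<mu> \<rho> x"
proof -
  have "finite_measure \<mu>" "finite_measure \<rho>" "sets \<mu> = cyl_sets" "sets \<rho> = cyl_sets"
    using assms(1,2) by (auto simp: seq_prob_def prob_space.finite_measure)
  then have "\<bar>cond_prob \<rho> B x - cond_prob \<mu> B x\<bar> \<le> 1" if "B \<in> cyl_sets" for B
    using that cond_prob_le_1 cond_prob_nonneg by (smt (verit))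
  then have "bdd_above ((\<lambda>B. \<bar>cond_prob \<rho> B x - cond_prob \<mu> B x\<bar>) ` cyl_sets)"
    by (intro bdd_aboveI[of _ 1]) auto
  then show ?thesis unfolding tv_dist_def using assms(3) by (rule cSUP_upper2) simp
qed

lemma tv_dist_leI:
  assumes "\<And>A. A \<in> cyl_sets \<Longrightarrow> \<bar>cond_prob \<rho> A x - cond_prob \<mu> A x\<bar> \<le> c"
  shows "tv_dist \<mu> \<rho> x \<le> c"
  unfolding tv_dist_def using UNIV_in_cyl_sets by (intro cSUP_least assms) blast

lemma tv_dist_nonneg:
  fixes \<mu> \<rho> :: "('a::countable) stream measure"
  assumes "seq_prob \<mu>" "seq_prob \<rho>"
  shows "0 \<le> tv_dist \<mu> \<rho> x"
  using abs_cond_prob_diff_le_tv_dist[OF assms UNIV_in_cyl_sets, of x] by linarith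

text \<open>A weak form of Levy's zero-one law. Approximate \<open>A\<close> by a prefix event \<open>B\<close>;
  the maximal inequality, applied to \<open>\<mu>\<close> restricted to \<open>B - A\<close>, bounds the set of points
  where some long enough cylinder has a large share of \<open>B - A\<close>.\<close>
lemma AE_eventually_cond_prob_gt:
  fixes \<mu> :: "('a::countable) stream measure"
  assumes \<mu>: "finite_measure \<mu>" "sets \<mu> = cyl_sets" and A: "A \<in> cyl_sets" and c: "0 \<le> c" "c < 1"
  shows "AE \<omega> in \<mu>. \<omega> \<in> A \<longrightarrow> (\<forall>\<^sub>F n in sequentially. c < cond_prob \<mu> A (stake n \<omega>))"
proof -
  interpret finite_measure \<mu> by fact
  show ?thesis
  proof (rule AE_of_small_exceptions)
    fix e :: real assume "e > 0"
    then have "(1 - c) * e > 0" using c by simp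
    then obtain m S where mS: "measure \<mu> (sym_diff A (stake m -` S)) < (1 - c) * e"
      using cyl_sets_approx_by_prefix_event[OF \<mu> A] by blast
    define B where "B = stake m -` S"
    define \<alpha> where "\<alpha> = density \<mu> (indicator (B - A))"
    have sets: "B \<in> sets \<mu>" "A \<in> sets \<mu>" using \<mu>(2) A by (auto simp: B_def)
    have "B - A \<in> sets \<mu>" using sets by blast
    then have \<alpha>: "finite_measure \<alpha>" "sets \<alpha> = cyl_sets"
      "\<And>X. X \<in> cyl_sets \<Longrightarrow> measure \<alpha> X = measure \<mu> ((B - A) \<inter> X)"
      unfolding \<alpha>_def using \<mu>(2) by (auto intro: finite_measure_restricted measure_restricted)
    define W where "W = {x. m \<le> length x \<and> (1 - c) * measure \<mu> (cyl x) \<le> measure \<alpha> (cyl x)}"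
    define G where "G = (\<Union>x\<in>W. cyl x)"
    have "(1 - c) * measure \<mu> G \<le> measure \<alpha> UNIV"
      unfolding G_def using \<mu> \<alpha> c by (intro measure_UN_cyl_le) (auto simp: W_def)
    then have "measure \<mu> G \<le> measure \<mu> (B - A) / (1 - c)"
      using \<alpha>(3)[of UNIV] c by (simp add: field_simps)
    moreover have "measure \<mu> (A - B) \<le> measure \<mu> (A - B) / (1 - c)"
      using c by (simp add: le_divide_eq mult_left_le)
    moreover have "measure \<mu> ((A - B) \<union> G) \<le> measure \<mu> (A - B) + measure \<mu> G"
      using sets \<mu>(2) by (intro measure_subadditive) (auto simp: G_def)
    ultimately have "measure \<mu> ((A - B) \<union> G) \<le> (measure \<mu> (A - B) + measure \<mu> (B - A)) / (1 - c)"
      by (simp add: add_divide_distrib)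
    also have "measure \<mu> (A - B) + measure \<mu> (B - A) = measure \<mu> (sym_diff A B)"
      using sets by (subst finite_measure_Union) auto
    also have "\<dots> / (1 - c) < e"
      using mS c by (simp add: B_def divide_less_eq mult.commute)
    finally have G: "measure \<mu> ((A - B) \<union> G) < e" .
    have "\<forall>\<^sub>F n in sequentially. c < cond_prob \<mu> A (stake n \<omega>)" if "\<omega> \<in> B" "\<omega> \<notin> G" for \<omega>
    proof (rule eventually_sequentiallyI)
      fix n assume "m \<le> n"
      have "cyl (stake n \<omega>) \<subseteq> B"
        using \<open>\<omega> \<in> B\<close> \<open>m \<le> n\<close> by (simp add: B_def cyl_stake_subset_prefix_event)
      then have "measure \<mu> (cyl (stake n \<omega>) - A) \<le> measure \<alpha> (cyl (stake n \<omega>))"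
        using sets \<mu>(2) by (subst \<alpha>(3)) (auto intro!: finite_measure_mono)
      also have "\<dots> < (1 - c) * measure \<mu> (cyl (stake n \<omega>))"
      proof -
        have "stake n \<omega> \<notin> W" using \<open>\<omega> \<notin> G\<close> stake_mem_cyl unfolding G_def by blast
        then show ?thesis using \<open>m \<le> n\<close> by (simp add: W_def not_le)
      qed
      finally show "c < cond_prob \<mu> A (stake n \<omega>)"
        by (rule cond_prob_gt_if_small_complement[OF \<mu> A])
    qed
    then show "\<exists>X\<in>sets \<mu>. measure \<mu> X < e \<and>
        (\<forall>\<omega>\<in>space \<mu> - X. \<omega> \<in> A \<longrightarrow> (\<forall>\<^sub>F n in sequentially. c < cond_prob \<mu> A (stake n \<omega>)))"
      using G sets \<mu>(2) by (intro bexI[of _ "(A - B) \<union> G"]) (auto simp: G_def)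
  qed
qed

lemma predicts_tv_imp_absolutely_continuous:
  fixes \<mu> \<rho> :: "('a::countable) stream measure"
  assumes \<mu>: "seq_prob \<mu>" and \<rho>: "seq_prob \<rho>" and "predicts_tv \<rho> \<mu>"
  shows "absolutely_continuous \<rho> \<mu>"
  unfolding absolutely_continuous_def
proof
  fix A assume A: "A \<in> null_sets \<rho>"
  then have A_sets: "A \<in> cyl_sets" "A \<in> sets \<mu>" using \<mu> \<rho> by (auto simp: seq_prob_def)
  have "cond_prob \<rho> A x = 0" for x
  proof -
    have "measure \<rho> (A \<inter> cyl x) = 0"
      using A \<rho> by (intro measure_eq_0_null_sets null_set_Int2) (auto simp: seq_prob_def)
    then show ?thesis by (simp add: cond_prob_def)
  qed
  then have tv: "cond_prob \<mu> A x \<le> tv_dist \<mu> \<rho> x" for x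
    using abs_cond_prob_diff_le_tv_dist[OF \<mu> \<rho> A_sets(1), of x] by simp
  have "AE \<omega> in \<mu>. \<omega> \<in> A \<longrightarrow> (\<forall>\<^sub>F n in sequentially. 1 / 2 < cond_prob \<mu> A (stake n \<omega>))"
    using \<mu> A_sets by (intro AE_eventually_cond_prob_gt) (auto simp: seq_prob_def prob_space.finite_measure)
  moreover note \<open>predicts_tv \<rho> \<mu>\<close>[unfolded predicts_tv_def]
  ultimately have "AE \<omega> in \<mu>. \<omega> \<notin> A"
  proof eventually_elim
    case (elim \<omega>)
    show "\<omega> \<notin> A"
    proof
      assume "\<omega> \<in> A"
      then have "\<forall>\<^sub>F n in sequentially. 1 / 2 < cond_prob \<mu> A (stake n \<omega>)"
        using elim(1) by blast
      then have "\<forall>\<^sub>F n in sequentially. 1 / 2 < tv_dist \<mu> \<rho> (stake n \<omega>)"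
        by (rule eventually_mono) (rule order.strict_trans2[OF _ tv])
      moreover have "\<forall>\<^sub>F n in sequentially. tv_dist \<mu> \<rho> (stake n \<omega>) < 1 / 2"
        using elim(2) by (rule order_tendstoD) simp
      ultimately have "\<forall>\<^sub>F n in sequentially. False" by eventually_elim simp
      then show False by simp
    qed
  qed
  then show "A \<in> null_sets \<mu>" using A_sets(2) by (simp add: AE_iff_null_sets)
qed

text \<open>On a cylinder \<open>cyl x\<close> with \<open>m \<le> length x\<close> the prefix function \<open>g (stake m \<omega>)\<close> is a
  constant \<open>y\<close>, and \<open>\<mu>\<close> agrees with \<open>y \<cdot> \<nu>\<close> there up to the \<open>L\<^sup>1\<close> error of the density.\<close>
lemma tv_dist_le_local_L1_error:
  fixes \<mu> \<nu> :: "('a::finite) stream measure" and g :: "'a list \<Rightarrow> real"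
  assumes \<nu>: "seq_prob \<nu>" and z: "integrable \<nu> z" "\<And>\<omega>. 0 \<le> z \<omega>"
    and \<mu>: "\<mu> = density \<nu> (\<lambda>\<omega>. ennreal (z \<omega>))"
    and x: "m \<le> length x" "0 < measure \<mu> (cyl x)"
  defines "err \<equiv> \<integral>\<omega>. \<bar>z \<omega> - g (stake m \<omega>)\<bar> * indicator (cyl x) \<omega> \<partial>\<nu>"
  shows "tv_dist \<mu> \<nu> x \<le> 2 * err / measure \<mu> (cyl x)"
proof -
  interpret finite_measure \<nu> using \<nu> by (simp add: seq_prob_def prob_space.finite_measure)
  have sets: "sets \<nu> = cyl_sets" using \<nu> by (simp add: seq_prob_def)
  have \<mu>_eq: "measure \<mu> E = (\<integral>\<omega>. z \<omega> * indicator E \<omega> \<partial>\<nu>)" if "E \<in> cyl_sets" for E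
    using measure_density_real(2)[OF z] that sets by (simp add: \<mu>)
  define y where "y = g (take m x)"
  have local: "\<bar>measure \<mu> E - y * measure \<nu> E\<bar> \<le> err" if E: "E \<in> cyl_sets" "E \<subseteq> cyl x" for E
  proof -
    have "\<bar>measure \<mu> E - y * measure \<nu> E\<bar> \<le> (\<integral>\<omega>. \<bar>z \<omega> - y\<bar> * indicator E \<omega> \<partial>\<nu>)"
      unfolding \<mu>_eq[OF E(1)] using E(1) sets
      by (intro abs_integral_indicator_sub_const_le finite_measure_axioms z) auto
    also have "\<dots> = (\<integral>\<omega>. \<bar>z \<omega> - g (stake m \<omega>)\<bar> * indicator E \<omega> \<partial>\<nu>)"
      using E(2) x(1) by (intro Bochner_Integration.integral_cong)
        (auto simp: y_def indicator_def stake_eq_if_mem_cyl)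
    also have "\<dots> \<le> err"
      unfolding err_def using E z sets integrable_prefix_function[OF finite_measure_axioms sets]
      by (intro integral_mono integrable_real_mult_indicator)
        (auto simp: indicator_def intro!: integrable_abs)
    finally show ?thesis .
  qed
  have "0 < measure \<nu> (cyl x)"
  proof (rule ccontr)
    assume "\<not> 0 < measure \<nu> (cyl x)"
    then have "cyl x \<in> null_sets \<nu>"
      using sets by (auto simp: null_sets_def emeasure_eq_measure less_le)
    then have "AE \<omega> in \<nu>. z \<omega> * indicator (cyl x) \<omega> = 0"
      by (rule AE_mp[OF AE_not_in]) auto
    then have "(\<integral>\<omega>. z \<omega> * indicator (cyl x) \<omega> \<partial>\<nu>) = 0"
      by (rule integral_eq_zero_AE)
    then show False
      using x(2) \<mu>_eq[of "cyl x"] by simp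
  qed
  show ?thesis
  proof (rule tv_dist_leI)
    fix A :: "'a stream set" assume "A \<in> cyl_sets"
    have "measure \<nu> (A \<inter> cyl x) \<le> measure \<nu> (cyl x)"
      using \<open>A \<in> cyl_sets\<close> sets by (intro finite_measure_mono) auto
    moreover have "\<bar>measure \<mu> (A \<inter> cyl x) - y * measure \<nu> (A \<inter> cyl x)\<bar> \<le> err"
      using \<open>A \<in> cyl_sets\<close> by (intro local) auto
    moreover have "\<bar>measure \<mu> (cyl x) - y * measure \<nu> (cyl x)\<bar> \<le> err"
      by (intro local) auto
    ultimately have "\<bar>measure \<nu> (A \<inter> cyl x) / measure \<nu> (cyl x) - measure \<mu> (A \<inter> cyl x) / measure \<mu> (cyl x)\<bar>
        \<le> 2 * err / measure \<mu> (cyl x)"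
      using \<open>0 < measure \<nu> (cyl x)\<close> x(2) by (intro abs_ratio_diff_le) auto
    then show "\<bar>cond_prob \<nu> A x - cond_prob \<mu> A x\<bar> \<le> 2 * err / measure \<mu> (cyl x)"
      by (simp add: cond_prob_def)
  qed
qed

text \<open>Approximate the density \<open>z = d\<mu>/d\<nu>\<close> in \<open>L\<^sup>1(\<nu>)\<close> by a prefix function; the maximal
  inequality for the measure with density \<open>\<bar>z - g \<circ> stake m\<bar>\<close> controls the set of points having
  a long cylinder on which this error is not small relative to \<open>\<mu>\<close>.\<close>
lemma AE_eventually_tv_dist_less:
  fixes \<mu> \<nu> :: "('a::finite) stream measure"
  assumes \<mu>: "seq_prob \<mu>" and \<nu>: "seq_prob \<nu>" and ac: "absolutely_continuous \<nu> \<mu>" and "l > 0"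
  shows "AE \<omega> in \<mu>. \<forall>\<^sub>F n in sequentially. tv_dist \<mu> \<nu> (stake n \<omega>) < l"
proof -
  interpret \<mu>: prob_space \<mu> using \<mu> by (simp add: seq_prob_def)
  interpret \<nu>: prob_space \<nu> using \<nu> by (simp add: seq_prob_def)
  have sets: "sets \<mu> = cyl_sets" "sets \<nu> = cyl_sets" using \<mu> \<nu> by (simp_all add: seq_prob_def)
  obtain z where z: "integrable \<nu> z" "\<And>\<omega>. 0 \<le> z \<omega>" and \<mu>_eq: "\<mu> = density \<nu> (\<lambda>\<omega>. ennreal (z \<omega>))"
    using real_density_if_absolutely_continuous[OF \<nu>.finite_measure_axioms \<mu>.finite_measure_axioms _ ac]
      sets by metis
  show ?thesis
  proof (rule \<mu>.AE_of_small_exceptions)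
    fix e :: real assume "e > 0"
    then obtain m g where mg: "(\<integral>\<omega>. \<bar>z \<omega> - g (stake m \<omega>)\<bar> \<partial>\<nu>) < l / 2 * e"
      using integrable_approx_by_prefix_function[OF \<nu>.finite_measure_axioms sets(2) z(1)] \<open>l > 0\<close>
      by (meson half_gt_zero mult_pos_pos)
    define h where "h \<omega> = \<bar>z \<omega> - g (stake m \<omega>)\<bar>" for \<omega>
    define \<alpha> where "\<alpha> = density \<nu> (\<lambda>\<omega>. ennreal (h \<omega>))"
    have h: "integrable \<nu> h" "\<And>\<omega>. 0 \<le> h \<omega>"
      unfolding h_def using z(1) integrable_prefix_function[OF \<nu>.finite_measure_axioms sets(2)] by auto
    have \<alpha>: "finite_measure \<alpha>" "sets \<alpha> = cyl_sets"
      "\<And>X. X \<in> cyl_sets \<Longrightarrow> measure \<alpha> X = (\<integral>\<omega>. h \<omega> * indicator X \<omega> \<partial>\<nu>)"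
      unfolding \<alpha>_def using measure_density_real[OF h] sets(2) by auto
    define W where "W = {x. m \<le> length x \<and> l / 2 * measure \<mu> (cyl x) \<le> measure \<alpha> (cyl x)}"
    define G where "G = (\<Union>x\<in>W. cyl x)"
    have "l / 2 * measure \<mu> G \<le> measure \<alpha> UNIV"
      unfolding G_def using \<mu>.finite_measure_axioms \<alpha> sets \<open>l > 0\<close>
      by (intro measure_UN_cyl_le) (auto simp: W_def)
    also have "\<dots> < l / 2 * e"
      using \<alpha>(3)[of UNIV] mg by (simp add: h_def)
    finally have "measure \<mu> G < e" using \<open>l > 0\<close> by simp
    moreover have "\<forall>\<^sub>F n in sequentially. tv_dist \<mu> \<nu> (stake n \<omega>) < l" if "\<omega> \<notin> G" for \<omega>
    proof (rule eventually_sequentiallyI)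
      fix n assume "m \<le> n"
      define x where "x = stake n \<omega>"
      have "x \<notin> W" using \<open>\<omega> \<notin> G\<close> stake_mem_cyl unfolding G_def x_def by blast
      then have small: "measure \<alpha> (cyl x) < l / 2 * measure \<mu> (cyl x)"
        using \<open>m \<le> n\<close> by (simp add: W_def x_def not_le)
      then have "0 < l / 2 * measure \<mu> (cyl x)"
        using measure_nonneg[of \<alpha> "cyl x"] by linarith
      then have "0 < measure \<mu> (cyl x)"
        using \<open>l > 0\<close> by (simp add: zero_less_mult_iff)
      then have "tv_dist \<mu> \<nu> x \<le> 2 * measure \<alpha> (cyl x) / measure \<mu> (cyl x)"
        using tv_dist_le_local_L1_error[OF \<nu> z \<mu>_eq, of m x g] \<open>m \<le> n\<close> \<alpha>(3)
        by (simp add: x_def h_def)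
      also have "\<dots> < l"
        using small \<open>0 < measure \<mu> (cyl x)\<close> by (simp add: divide_less_eq)
      finally show "tv_dist \<mu> \<nu> (stake n \<omega>) < l" by (simp add: x_def)
    qed
    ultimately show "\<exists>G\<in>sets \<mu>. measure \<mu> G < e \<and>
        (\<forall>\<omega>\<in>space \<mu> - G. \<forall>\<^sub>F n in sequentially. tv_dist \<mu> \<nu> (stake n \<omega>) < l)"
      using sets(1) by (intro bexI[of _ G]) (auto simp: G_def)
  qed
qed

theorem absolutely_continuous_imp_predicts_tv:
  fixes \<mu> \<nu> :: "('a::finite) stream measure"
  assumes \<mu>: "seq_prob \<mu>" and \<nu>: "seq_prob \<nu>" and "absolutely_continuous \<nu> \<mu>"
  shows "predicts_tv \<nu> \<mu>"
proof -
  have "AE \<omega> in \<mu>. \<forall>i. \<forall>\<^sub>F n in sequentially. tv_dist \<mu> \<nu> (stake n \<omega>) < inverse (Suc i)"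
    unfolding AE_all_countable using assms by (intro allI AE_eventually_tv_dist_less) auto
  then show ?thesis
    unfolding predicts_tv_def
  proof eventually_elim
    case (elim \<omega>)
    show ?case
    proof (rule order_tendstoI)
      show "\<forall>\<^sub>F n in sequentially. a < tv_dist \<mu> \<nu> (stake n \<omega>)" if "a < 0" for a
        using that tv_dist_nonneg[OF \<mu> \<nu>] by (simp add: order.strict_trans2)
      show "\<forall>\<^sub>F n in sequentially. tv_dist \<mu> \<nu> (stake n \<omega>) < a" if "0 < a" for a
      proof -
        obtain i where "inverse (Suc i) < a" using reals_Archimedean[OF \<open>0 < a\<close>] by blast
        then show ?thesis
          using elim[rule_format, of i] by (auto elim: eventually_mono)
      qed
    qed
  qed
qed

section \<open>Mixtures\<close>

lemma sets_mixture [simp]: "sets (mixture w \<mu>s) = cyl_sets"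
  unfolding mixture_def using sigma_algebra.sigma_sets_eq[OF sigma_algebra_cyl_sets] by simp

lemma emeasure_mixture:
  assumes "\<And>k. sets (\<mu>s k) = cyl_sets" "A \<in> cyl_sets"
  shows "emeasure (mixture w \<mu>s) A = (\<Sum>k. ennreal (w k) * emeasure (\<mu>s k) A)"
  unfolding mixture_def
proof (rule emeasure_measure_of_sigma[OF sigma_algebra_cyl_sets _ _ assms(2)])
  show "positive cyl_sets (\<lambda>A. \<Sum>k. ennreal (w k) * emeasure (\<mu>s k) A)"
    by (simp add: positive_def)
  show "countably_additive cyl_sets (\<lambda>A. \<Sum>k. ennreal (w k) * emeasure (\<mu>s k) A)"
    unfolding countably_additive_def
  proof (intro allI impI)
    fix F :: "nat \<Rightarrow> 'a stream set"
    assume F: "range F \<subseteq> cyl_sets" "disjoint_family F" "\<Union> (range F) \<in> cyl_sets"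
    have "(\<Sum>i. \<Sum>k. ennreal (w k) * emeasure (\<mu>s k) (F i))
        = (\<integral>\<^sup>+i. (\<Sum>k. ennreal (w k) * emeasure (\<mu>s k) (F i)) \<partial>count_space UNIV)"
      by (simp add: nn_integral_count_space_nat)
    also have "\<dots> = (\<Sum>k. \<integral>\<^sup>+i. ennreal (w k) * emeasure (\<mu>s k) (F i) \<partial>count_space UNIV)"
      by (rule nn_integral_suminf) simp
    also have "\<dots> = (\<Sum>k. ennreal (w k) * emeasure (\<mu>s k) (\<Union>i. F i))"
      using F assms(1) by (simp add: nn_integral_count_space_nat ennreal_suminf_cmult suminf_emeasure)
    finally show "(\<Sum>i. \<Sum>k. ennreal (w k) * emeasure (\<mu>s k) (F i))
        = (\<Sum>k. ennreal (w k) * emeasure (\<mu>s k) (\<Union> (range F)))" .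
  qed
qed

lemma seq_prob_mixture:
  assumes "\<And>k. seq_prob (\<mu>s k)" "\<And>k. 0 \<le> w k" "w sums 1"
  shows "seq_prob (mixture w \<mu>s)"
proof -
  have sets: "sets (\<mu>s k) = cyl_sets" for k
    using assms(1) by (simp add: seq_prob_def)
  have "emeasure (\<mu>s k) UNIV = 1" for k
    using assms(1)[of k] prob_space.emeasure_space_1[of "\<mu>s k"] by (simp add: seq_prob_def)
  then have "emeasure (mixture w \<mu>s) UNIV = (\<Sum>k. ennreal (w k))"
    using sets by (simp add: emeasure_mixture)
  also have "\<dots> = 1"
    using assms(2,3) by (simp add: suminf_ennreal2 sums_iff)
  finally show ?thesis
    unfolding seq_prob_def using sets_cyl_imp_space_UNIV[OF sets_mixture]
    by (auto intro: prob_spaceI)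
qed

lemma null_sets_mixture:
  assumes "\<And>k. sets (\<mu>s k) = cyl_sets" "\<And>k. 0 < w k"
  shows "null_sets (mixture w \<mu>s) = (\<Inter>k. null_sets (\<mu>s k))"
proof -
  have "(\<Sum>k. ennreal (w k) * emeasure (\<mu>s k) A) = 0 \<longleftrightarrow> (\<forall>k. emeasure (\<mu>s k) A = 0)" for A
    using assms(2) by (subst suminf_eq_zero_iff) (auto intro: summableI simp: less_le)
  then show ?thesis
    using assms(1) by (auto simp: null_sets_def emeasure_mixture)
qed

theorem theorem1:
  fixes C :: "('a::finite) stream measure set"
    and \<rho> :: "'a stream measure"
  assumes "C \<noteq> {}"
    and "\<forall>\<mu>\<in>C. seq_prob \<mu>"
    and "seq_prob \<rho>"
    and "\<forall>\<mu>\<in>C. predicts_tv \<rho> \<mu>"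
  shows "\<exists>\<mu>s :: nat \<Rightarrow> 'a stream measure. (\<forall>k. \<mu>s k \<in> C) \<and>
           (\<forall>w :: nat \<Rightarrow> real. (\<forall>k. w k > 0) \<and> w sums 1 \<longrightarrow>
              (\<forall>\<mu>\<in>C. predicts_tv (mixture w \<mu>s) \<mu>))"
proof -
  have ac: "absolutely_continuous \<rho> \<mu>" if "\<mu> \<in> C" for \<mu>
    using that assms(2-4) by (blast intro: predicts_tv_imp_absolutely_continuous)
  have fin: "finite_measure \<rho>" and sets: "\<And>\<mu>. \<mu> \<in> C \<Longrightarrow> sets \<mu> = sets \<rho>"
    using assms(2,3) by (auto simp: seq_prob_def prob_space.finite_measure)
  obtain \<mu>s :: "nat \<Rightarrow> 'a stream measure" where \<mu>s: "range \<mu>s \<subseteq> C"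
    and null: "\<And>\<mu>. \<mu> \<in> C \<Longrightarrow> (\<Inter>k. null_sets (\<mu>s k)) \<subseteq> null_sets \<mu>"
    using halmos_savage[OF fin assms(1) sets ac] by metis
  have \<mu>s_prob: "seq_prob (\<mu>s k)" for k using \<mu>s assms(2) by blast
  have "predicts_tv (mixture w \<mu>s) \<mu>" if w: "\<forall>k. w k > 0" "w sums 1" and "\<mu> \<in> C" for w \<mu>
  proof (rule absolutely_continuous_imp_predicts_tv)
    show "seq_prob \<mu>" using \<open>\<mu> \<in> C\<close> assms(2) by blast
    show "seq_prob (mixture w \<mu>s)"
      using w by (intro seq_prob_mixture \<mu>s_prob) (auto intro: less_imp_le)
    show "absolutely_continuous (mixture w \<mu>s) \<mu>"
      unfolding absolutely_continuous_def using \<mu>s_prob w null[OF \<open>\<mu> \<in> C\<close>]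
      by (subst null_sets_mixture) (auto simp: seq_prob_def)
  qed
  then show ?thesis using \<mu>s by blast
qed

end
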